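(* Let $A$ be a nonempty countable alphabet and $X\subseteq A^{\mathbb{N}}$ a shift space. The following are equivalent: (i) $X$ is a shift of finite order; (ii) $(X,d_\Pi,\sigma)$ has the shadowing property; (iii) $(X,d_\Pi,\sigma)$ has the finite shadowing property.
   Context: $A$ carries the discrete topology; $A^{\mathbb{N}}$ carries the product topology and the metric $d_\Pi(x,y)=1/(i+1)$ where $i$ is the least index with $x_i\ne y_i$ ($d_\Pi(x,x)=0$). The shift map is $\sigma((x_i)_i)=(x_{i+1})_i$. A shift space is a closed $X\subseteq A^{\mathbb{N}}$ with $\sigma(X)\subseteq X$. For a set $F$ of finite words over $A$, $X_F$ is the set of sequences in $A^{\mathbb{N}}$ containing no word of $F$ as a block of consecutive entries. $X$ has order $p$ ($p\in\mathbb{N}$) if $X=X_F$ for some set $F$ of words all of length $p$; $X$ is of finite order if it has order $p$ for some $p$. For a map $f$ on a metric space, a $\delta$-pseudo-orbit is a (finite or infinite) sequence $(x_n)$ with $d(f(x_n),x_{n+1})<\delta$ for consecutive indices; $x$ $\varepsilon$-shadows it if $d(f^n(x),x_n)<\varepsilon$ for all indices. Finite shadowing property: for every $\varepsilon>0$ there is $\delta>0$ such that every finite $\delta$-pseudo-orbit is $\varepsilon$-shadowed by some point; shadowing property: the same for infinite pseudo-orbits. *)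

theory Defs
  imports "HOL-Analysis.Analysis"
begin

definition full_shift :: "'a set \<Rightarrow> (nat \<Rightarrow> 'a) set" where
  "full_shift A = {x. \<forall>i. x i \<in> A}"

definition prod_top :: "'a set \<Rightarrow> (nat \<Rightarrow> 'a) topology" where
  "prod_top A = product_topology (\<lambda>_. discrete_topology A) UNIV"

definition shift_map :: "(nat \<Rightarrow> 'a) \<Rightarrow> (nat \<Rightarrow> 'a)" where
  "shift_map x = (\<lambda>i. x (Suc i))"

definition dPi :: "(nat \<Rightarrow> 'a) \<Rightarrow> (nat \<Rightarrow> 'a) \<Rightarrow> real" where
  "dPi x y = (if x = y then 0 else 1 / real (Suc (LEAST i. x i \<noteq> y i)))"

definition is_shift_space :: "'a set \<Rightarrow> (nat \<Rightarrow> 'a) set \<Rightarrow> bool" where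
  "is_shift_space A X \<longleftrightarrow> X \<subseteq> full_shift A \<and> closedin (prod_top A) X \<and> shift_map ` X \<subseteq> X"

definition occurs_in :: "'a list \<Rightarrow> (nat \<Rightarrow> 'a) \<Rightarrow> bool" where
  "occurs_in w x \<longleftrightarrow> (\<exists>i. \<forall>j<length w. x (i + j) = w ! j)"

definition X_F :: "'a set \<Rightarrow> 'a list set \<Rightarrow> (nat \<Rightarrow> 'a) set" where
  "X_F A F = {x \<in> full_shift A. \<forall>w\<in>F. \<not> occurs_in w x}"

definition has_order :: "'a set \<Rightarrow> (nat \<Rightarrow> 'a) set \<Rightarrow> nat \<Rightarrow> bool" where
  "has_order A X p \<longleftrightarrow> (\<exists>F. (\<forall>w\<in>F. length w = p) \<and> X = X_F A F)"

definition finite_order :: "'a set \<Rightarrow> (nat \<Rightarrow> 'a) set \<Rightarrow> bool" where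
  "finite_order A X \<longleftrightarrow> (\<exists>p. has_order A X p)"

definition shadowing :: "'b set \<Rightarrow> ('b \<Rightarrow> 'b \<Rightarrow> real) \<Rightarrow> ('b \<Rightarrow> 'b) \<Rightarrow> bool" where
  "shadowing S d f \<longleftrightarrow> (\<forall>\<epsilon>>0. \<exists>\<delta>>0. \<forall>xs :: nat \<Rightarrow> 'b.
     ((\<forall>n. xs n \<in> S) \<and> (\<forall>n. d (f (xs n)) (xs (Suc n)) < \<delta>)) \<longrightarrow>
     (\<exists>x\<in>S. \<forall>n. d ((f ^^ n) x) (xs n) < \<epsilon>))"

definition finite_shadowing :: "'b set \<Rightarrow> ('b \<Rightarrow> 'b \<Rightarrow> real) \<Rightarrow> ('b \<Rightarrow> 'b) \<Rightarrow> bool" where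
  "finite_shadowing S d f \<longleftrightarrow> (\<forall>\<epsilon>>0. \<exists>\<delta>>0. \<forall>(N::nat) (xs :: nat \<Rightarrow> 'b).
     ((\<forall>n\<le>N. xs n \<in> S) \<and> (\<forall>n<N. d (f (xs n)) (xs (Suc n)) < \<delta>)) \<longrightarrow>
     (\<exists>x\<in>S. \<forall>n\<le>N. d ((f ^^ n) x) (xs n) < \<epsilon>))"

end

theory Submission
  imports Defs
begin

(* A \<delta>-pseudo-orbit of the shift with \<delta> = 1/(M+1) is a sequence of points each agreeing with
   the shift of its predecessor on the first M+1 coordinates. Hence the sequence z of their first
   letters shadows it, and every block of z of length at most M+1 is an initial block of a point
   of the pseudo-orbit. If X has order p \<le> M+1, membership in X depends only on the p-blocks of
   a point, so z lies in X.
   Conversely, suppose finite shadowing holds with \<epsilon> = 1 and some \<delta> > 1/(K+1), and let y be a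
   point all of whose (K+2)-blocks are initial blocks of points of X. Choosing such points along
   y gives a \<delta>-pseudo-orbit whose finite pieces are shadowed by points of X agreeing with y on
   arbitrarily long prefixes; as X is closed, y \<in> X. So X is defined by forbidding the
   (K+2)-words that do not occur in X. *)

lemma dPi_less_inverse_Suc_iff:
  "dPi x y < 1 / real (Suc K) \<longleftrightarrow> (\<forall>i\<le>K. x i = y i)"
proof (cases "x = y")
  case True
  then show ?thesis by (simp add: dPi_def)
next
  case False
  define L where "L = (LEAST i. x i \<noteq> y i)"
  have "\<exists>i. x i \<noteq> y i"
    using False by auto
  then have "x L \<noteq> y L"
    unfolding L_def by (rule LeastI_ex)
  moreover have "\<And>i. i < L \<Longrightarrow> x i = y i"
    unfolding L_def using not_less_Least by blast
  ultimately have "(\<forall>i\<le>K. x i = y i) \<longleftrightarrow> K < L"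
    by (meson leI le_trans order.strict_trans1)
  moreover have "dPi x y = 1 / real (Suc L)"
    using False by (simp add: dPi_def L_def)
  moreover have "1 / real (Suc L) < 1 / real (Suc K) \<longleftrightarrow> K < L"
    by (simp add: divide_inverse)
  ultimately show ?thesis
    by simp
qed

lemma dPi_less_one_iff: "dPi x y < 1 \<longleftrightarrow> x 0 = y 0"
  using dPi_less_inverse_Suc_iff[of x y 0] by simp

lemma dPi_self [simp]: "dPi x x = 0"
  by (simp add: dPi_def)

lemma funpow_in_invariant:
  assumes "f ` S \<subseteq> S" and "x \<in> S"
  shows "(f ^^ n) x \<in> S"
  using assms by (induction n) auto

lemma funpow_shift_map: "(shift_map ^^ n) x = (\<lambda>i. x (n + i))"
  by (induction n arbitrary: x) (auto simp: shift_map_def funpow_Suc_right)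

lemma limitin_discrete_topology_eventually_eq:
  assumes "l \<in> A" and "\<And>n. N \<le> n \<Longrightarrow> f n = l"
  shows "limitin (discrete_topology A) f l sequentially"
  unfolding limitin_def eventually_sequentially
proof (intro conjI allI impI exI[of _ N])
  show "l \<in> topspace (discrete_topology A)"
    using assms(1) by simp
  show "f n \<in> U" if "openin (discrete_topology A) U \<and> l \<in> U" "N \<le> n" for U n
    using that assms(2) by simp
qed

lemma in_closedin_prod_top_if_prefixes:
  assumes "closedin (prod_top A) X" and "y \<in> full_shift A"
    and "\<And>M. \<exists>x\<in>X. \<forall>i\<le>M. x i = y i"
  shows "y \<in> X"
proof -
  obtain xs where xs: "\<And>M. xs M \<in> X" "\<And>M i. i \<le> M \<Longrightarrow> xs M i = y i"
    using assms(3) by metis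
  have lim: "limitin (prod_top A) xs y sequentially"
    unfolding prod_top_def limitin_componentwise
  proof (intro conjI ballI always_eventually allI)
    show "y \<in> extensional UNIV"
      by simp
    show "xs M \<in> topspace (product_topology (\<lambda>_. discrete_topology A) UNIV)" for M
      using assms(1) xs(1) closedin_subset unfolding prod_top_def by blast
    show "limitin (discrete_topology A) (\<lambda>M. xs M i) (y i) sequentially" for i
      using assms(2) xs(2) by (intro limitin_discrete_topology_eventually_eq) (auto simp: full_shift_def)
  qed
  have "\<forall>\<^sub>F M in sequentially. xs M \<in> X"
    using xs(1) by simp
  then show ?thesis
    using limitin_closedin[OF lim assms(1)] by simp
qed

definition blocks_in :: "(nat \<Rightarrow> 'a) set \<Rightarrow> nat \<Rightarrow> (nat \<Rightarrow> 'a) \<Rightarrow> bool" where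
  "blocks_in X p y \<longleftrightarrow> (\<forall>n. \<exists>x\<in>X. \<forall>j<p. x j = y (n + j))"

lemma has_order_iff_blocks_in:
  assumes "X \<subseteq> full_shift A" and "shift_map ` X \<subseteq> X"
  shows "has_order A X p \<longleftrightarrow> (\<forall>y\<in>full_shift A. blocks_in X p y \<longrightarrow> y \<in> X)"
proof
  assume "has_order A X p"
  then obtain F where F: "\<forall>w\<in>F. length w = p" "X = X_F A F"
    unfolding has_order_def by blast
  show "\<forall>y\<in>full_shift A. blocks_in X p y \<longrightarrow> y \<in> X"
  proof (intro ballI impI)
    fix y assume y: "y \<in> full_shift A" "blocks_in X p y"
    have "\<not> occurs_in w y" if "w \<in> F" for w
    proof
      assume "occurs_in w y"
      then obtain n where n: "\<forall>j<length w. y (n + j) = w ! j"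
        unfolding occurs_in_def by blast
      obtain x where "x \<in> X" "\<forall>j<p. x j = y (n + j)"
        using y(2) unfolding blocks_in_def by blast
      then have "x \<in> X_F A F" "occurs_in w x"
        using F n that by (auto simp: occurs_in_def intro!: exI[of _ 0])
      then show False
        using that by (simp add: X_F_def)
    qed
    then show "y \<in> X"
      using y(1) F(2) by (simp add: X_F_def)
  qed
next
  assume blocks_closed: "\<forall>y\<in>full_shift A. blocks_in X p y \<longrightarrow> y \<in> X"
  define F where "F = {w. length w = p \<and> \<not> (\<exists>x\<in>X. occurs_in w x)}"
  have "X_F A F \<subseteq> X"
  proof
    fix y assume y: "y \<in> X_F A F"
    have "\<exists>x\<in>X. \<forall>j<p. x j = y (n + j)" for n
    proof -
      define w where "w = map (\<lambda>j. y (n + j)) [0..<p]"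
      have "occurs_in w y"
        by (auto simp: occurs_in_def w_def)
      then have "w \<notin> F"
        using y by (auto simp: X_F_def)
      then obtain x i where "x \<in> X" "\<forall>j<p. x (i + j) = w ! j"
        by (auto simp: F_def w_def occurs_in_def)
      then show ?thesis
        using funpow_in_invariant[OF assms(2), of x i] by (auto simp: funpow_shift_map w_def)
    qed
    then show "y \<in> X"
      using blocks_closed y by (auto simp: blocks_in_def X_F_def)
  qed
  moreover have "X \<subseteq> X_F A F"
    using assms(1) by (auto simp: X_F_def F_def)
  moreover have "\<forall>w\<in>F. length w = p"
    by (simp add: F_def)
  ultimately show "has_order A X p"
    unfolding has_order_def by blast
qed

lemma shift_pseudo_orbit_traced:
  assumes "\<And>n. dPi (shift_map (xs n)) (xs (Suc n)) < 1 / real (Suc M)" and "i \<le> Suc M"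
  shows "(shift_map ^^ n) (\<lambda>k. xs k 0) i = xs n i"
  using assms(2)
proof (induction i arbitrary: n)
  case 0
  then show ?case
    by (simp add: funpow_shift_map)
next
  case (Suc i)
  have "(shift_map ^^ n) (\<lambda>k. xs k 0) (Suc i) = (shift_map ^^ Suc n) (\<lambda>k. xs k 0) i"
    by (simp only: funpow_shift_map) simp
  also have "\<dots> = xs (Suc n) i"
    using Suc Suc_leD by blast
  also have "\<dots> = xs n (Suc i)"
    using assms(1)[of n, unfolded dPi_less_inverse_Suc_iff] Suc.prems by (simp add: shift_map_def)
  finally show ?case .
qed

lemma blocks_in_shift_pseudo_orbit:
  assumes "blocks_in X (Suc (Suc K)) y"
  obtains xs where "\<And>n. xs n \<in> X" and "\<And>n. xs n 0 = y n"
    and "\<And>n. dPi (shift_map (xs n)) (xs (Suc n)) < 1 / real (Suc K)"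
proof -
  obtain xs where xs: "\<And>n. xs n \<in> X" "\<And>n j. j < Suc (Suc K) \<Longrightarrow> xs n j = y (n + j)"
    using assms unfolding blocks_in_def by metis
  have "dPi (shift_map (xs n)) (xs (Suc n)) < 1 / real (Suc K)" for n
    unfolding dPi_less_inverse_Suc_iff using xs(2) by (simp add: shift_map_def)
  moreover have "xs n 0 = y n" for n
    using xs(2)[of 0 n] by simp
  ultimately show ?thesis
    using that xs(1) by blast
qed

lemma finite_order_imp_shadowing:
  assumes "is_shift_space A X" and "finite_order A X"
  shows "shadowing X dPi shift_map"
  unfolding shadowing_def
proof (intro allI impI)
  fix \<epsilon> :: real assume "\<epsilon> > 0"
  then obtain K where K: "1 / real (Suc K) < \<epsilon>"
    using reals_Archimedean unfolding inverse_eq_divide by blast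
  obtain p where p: "has_order A X p"
    using assms(2) unfolding finite_order_def by blast
  have XA: "X \<subseteq> full_shift A" and sX: "shift_map ` X \<subseteq> X"
    using assms(1) by (auto simp: is_shift_space_def)
  define M where "M = K + p"
  show "\<exists>\<delta>>0. \<forall>xs. (\<forall>n. xs n \<in> X) \<and> (\<forall>n. dPi (shift_map (xs n)) (xs (Suc n)) < \<delta>) \<longrightarrow>
          (\<exists>x\<in>X. \<forall>n. dPi ((shift_map ^^ n) x) (xs n) < \<epsilon>)"
  proof (intro exI[of _ "1 / real (Suc M)"] conjI allI impI)
    fix xs
    assume xs: "(\<forall>n. xs n \<in> X) \<and> (\<forall>n. dPi (shift_map (xs n)) (xs (Suc n)) < 1 / real (Suc M))"
    define z where "z = (\<lambda>k. xs k 0)"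
    have traced: "(shift_map ^^ n) z i = xs n i" if "i \<le> Suc M" for n i
      using shift_pseudo_orbit_traced xs that unfolding z_def by blast
    have "blocks_in X p z"
      unfolding blocks_in_def
    proof
      fix n
      show "\<exists>x\<in>X. \<forall>j<p. x j = z (n + j)"
        using xs traced[of _ n] by (auto simp: M_def funpow_shift_map)
    qed
    moreover have "z \<in> full_shift A"
      using xs XA by (auto simp: z_def full_shift_def)
    ultimately have "z \<in> X"
      using has_order_iff_blocks_in[OF XA sX] p by blast
    moreover have "dPi ((shift_map ^^ n) z) (xs n) < \<epsilon>" for n
    proof -
      have "dPi ((shift_map ^^ n) z) (xs n) < 1 / real (Suc K)"
        unfolding dPi_less_inverse_Suc_iff using traced by (simp add: M_def)
      then show ?thesis
        using K by linarith
    qed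
    ultimately show "\<exists>x\<in>X. \<forall>n. dPi ((shift_map ^^ n) x) (xs n) < \<epsilon>"
      by blast
  qed simp
qed

lemma shadowing_imp_finite_shadowing:
  assumes "f ` S \<subseteq> S" and "\<And>x. x \<in> S \<Longrightarrow> d x x = 0" and "shadowing S d f"
  shows "finite_shadowing S d f"
  unfolding finite_shadowing_def
proof (intro allI impI)
  fix \<epsilon> :: real assume "\<epsilon> > 0"
  then obtain \<delta> where "\<delta> > 0" and \<delta>: "\<forall>xs. (\<forall>n. xs n \<in> S) \<and> (\<forall>n. d (f (xs n)) (xs (Suc n)) < \<delta>)
      \<longrightarrow> (\<exists>x\<in>S. \<forall>n. d ((f ^^ n) x) (xs n) < \<epsilon>)"
    using assms(3) unfolding shadowing_def by blast
  show "\<exists>\<delta>>0. \<forall>N xs. (\<forall>n\<le>N. xs n \<in> S) \<and> (\<forall>n<N. d (f (xs n)) (xs (Suc n)) < \<delta>) \<longrightarrow>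
          (\<exists>x\<in>S. \<forall>n\<le>N. d ((f ^^ n) x) (xs n) < \<epsilon>)"
  proof (intro exI[of _ \<delta>] conjI allI impI)
    fix N xs assume xs: "(\<forall>n\<le>N. xs n \<in> S) \<and> (\<forall>n<N. d (f (xs n)) (xs (Suc n)) < \<delta>)"
    define ys where "ys n = (if n \<le> N then xs n else (f ^^ (n - N)) (xs N))" for n
    have ys_in: "ys n \<in> S" for n
      using xs funpow_in_invariant[OF assms(1)] by (simp add: ys_def)
    moreover have "d (f (ys n)) (ys (Suc n)) < \<delta>" for n
    proof (cases "n < N")
      case True
      then show ?thesis
        using xs by (simp add: ys_def)
    next
      case False
      then have "ys (Suc n) = f (ys n)"
        by (auto simp: ys_def Suc_diff_le)
      then show ?thesis
        using assms(2)[OF ys_in[of "Suc n"]] \<open>\<delta> > 0\<close> by simp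
    qed
    ultimately obtain x where "x \<in> S" "\<forall>n. d ((f ^^ n) x) (ys n) < \<epsilon>"
      using \<delta>[rule_format, of ys] by blast
    then show "\<exists>x\<in>S. \<forall>n\<le>N. d ((f ^^ n) x) (xs n) < \<epsilon>"
      by (metis ys_def)
  qed (rule \<open>\<delta> > 0\<close>)
qed

lemma finite_shadowing_imp_finite_order:
  assumes "is_shift_space A X" and "finite_shadowing X dPi shift_map"
  shows "finite_order A X"
proof -
  have XA: "X \<subseteq> full_shift A" and sX: "shift_map ` X \<subseteq> X" and closed: "closedin (prod_top A) X"
    using assms(1) by (auto simp: is_shift_space_def)
  obtain \<delta> where "\<delta> > 0" and \<delta>: "\<forall>N xs. (\<forall>n\<le>N. xs n \<in> X) \<and> (\<forall>n<N. dPi (shift_map (xs n)) (xs (Suc n)) < \<delta>)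
      \<longrightarrow> (\<exists>x\<in>X. \<forall>n\<le>N. dPi ((shift_map ^^ n) x) (xs n) < 1)"
    using assms(2)[unfolded finite_shadowing_def, rule_format, OF zero_less_one] by blast
  then obtain K where K: "1 / real (Suc K) < \<delta>"
    using reals_Archimedean unfolding inverse_eq_divide by blast
  have "y \<in> X" if y: "y \<in> full_shift A" "blocks_in X (Suc (Suc K)) y" for y
  proof -
    obtain xs where xs: "\<And>n. xs n \<in> X" "\<And>n. xs n 0 = y n"
      "\<And>n. dPi (shift_map (xs n)) (xs (Suc n)) < 1 / real (Suc K)"
      using blocks_in_shift_pseudo_orbit[OF y(2)] by blast
    have "\<exists>x\<in>X. \<forall>i\<le>M. x i = y i" for M
    proof -
      obtain x where "x \<in> X" "\<forall>n\<le>M. dPi ((shift_map ^^ n) x) (xs n) < 1"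
        using \<delta>[rule_format, of M xs] xs(1,3) K by (meson less_trans)
      then show ?thesis
        using xs(2) by (auto simp: dPi_less_one_iff funpow_shift_map)
    qed
    then show "y \<in> X"
      using in_closedin_prod_top_if_prefixes[OF closed y(1)] by blast
  qed
  then have "has_order A X (Suc (Suc K))"
    using has_order_iff_blocks_in[OF XA sX] by blast
  then show ?thesis
    unfolding finite_order_def by blast
qed

theorem proposition2p19:
  fixes A :: "'a set" and X :: "(nat \<Rightarrow> 'a) set"
  assumes "A \<noteq> {}" and "countable A" and "is_shift_space A X"
  shows "(finite_order A X \<longleftrightarrow> shadowing X dPi shift_map)
       \<and> (shadowing X dPi shift_map \<longleftrightarrow> finite_shadowing X dPi shift_map)"
proof -
  have "shift_map ` X \<subseteq> X"
    using assms(3) by (simp add: is_shift_space_def)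
  then have "shadowing X dPi shift_map \<Longrightarrow> finite_shadowing X dPi shift_map"
    by (rule shadowing_imp_finite_shadowing) simp_all
  then show ?thesis
    using finite_order_imp_shadowing[OF assms(3)] finite_shadowing_imp_finite_order[OF assms(3)]
    by blast
qed

end
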